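(* Let $h_1,\dots,h_{n-k}$ be the generators of a valid rate-$k/n$ quantum convolutional code whose memory commutativity matrix $\Omega$ is not full rank, and fix $m$-qubit memory operators $g_{i,j}$ consistent with $\Omega$ (i.e. $g_{i,j}\odot g_{i',j'}=[\Omega]_{(i,j),(i',j')}$). Let $C$ be the set of $m$-qubit Pauli operators commuting with all $g_{i,j}$, and suppose the set $S_1$ (defined in the context) is empty. Let $M_1,\dots,M_a$ be a complete basis of $C$ (with $a\le k$). Add to the encoding transformation the rows $$I^{\otimes m}\otimes I^{\otimes(n-k)}\otimes X_t\ \longrightarrow\ I^{\otimes n}\otimes M_t,\qquad t=1,\dots,a,$$ where $X_t$ is the Pauli $X$ on the $t$-th information qubit. Then every Clifford encoder implementing the encoding transformation together with these added rows is non-catastrophic.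
   Context: Pauli operators are considered up to phase; $A\odot B\in\{0,1\}$ is $1$ iff $A,B$ anticommute, additive mod 2 over tensor factors. The weight of a Pauli operator is its number of non-identity tensor factors. A rate-$k/n$ quantum convolutional code is given by $n-k$ generators $h_i=(h_{i,1}|\cdots|h_{i,l_i})$ of $n$-qubit Pauli operators (frames of $n$ qubits) and all their frame shifts; it is valid if all these pairwise commute, i.e. $\sum_r h_{i,r+t}\odot h_{i',r}=0$ for all $i,i',t$ (with $h_{i,j}=I^{\otimes n}$ outside $1\le j\le l_i$). Encoding transformation: a Clifford unitary $U$ acting on $m$ memory, $n-k$ ancilla and $k$ information qubits and outputting $n$ physical and $m$ memory qubits implements it if, for each $1\le i\le n-k$ and $0\le j\le l_i-1$, $U$ maps $g_{i,j}\otimes A_{i,j}\otimes I^{\otimes k}$ to $h_{i,j+1}\otimes g_{i,j+1}$ (up to phase), where $g_{i,0}=g_{i,l_i}=I^{\otimes m}$, $A_{i,0}=Z_i$ (Pauli $Z$ on the $i$-th ancilla), $A_{i,j}=I^{\otimes(n-k)}$ for $j\ge1$, and $g_{i,j}$ ($1\le j\le l_i-1$) are $m$-qubit Pauli operators. Each such requirement is a "row" (input $\to$ output); products of rows (multiplying inputs together and outputs together) are also input–output relations of $U$. Memory commutativity matrix $\Omega$: the symmetric binary matrix indexed by $(i,j)$, $1\le i\le n-k$, $1\le j\le l_i-1$, with entries $g_{i,j}\odot g_{i',j'}$, forced by consistency of commutation relations (for $j\ge j'$ they equal $\sum_{r\ge1}h_{i,j+r}\odot h_{i',j'+r}$); rank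 is over $\mathbb{F}_2$. $C$ is a group (modulo phases, an $\mathbb{F}_2$-vector space); a complete basis of $C$ is an independent generating set of it. $S_1$ is the set of nontrivial rows or products of rows of the encoding transformation of the form $M\otimes S^z\otimes L\to I^{\otimes n}\otimes M'$ with $M,M'\in C$, $S^z\in\{I,Z\}^{\otimes(n-k)}$ and $L$ an arbitrary $k$-qubit Pauli operator. State diagram of $U$: vertices are $m$-qubit Pauli operators; an edge $M\to M'$ labeled $(L,P)$ exists whenever $U$ maps $M\otimes S^z\otimes L$ to $P\otimes M'$ for some $S^z\in\{I,Z\}^{\otimes(n-k)}$, $k$-qubit Pauli $L$, $n$-qubit Pauli $P$. Physical (logical) weight of an edge is the weight of $P$ (of $L$). $U$ is catastrophic if there is a cycle in the state diagram all of whose edges have zero physical weight and at least one of whose edges has nonzero logical weight; otherwise non-catastrophic. *)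

theory Defs
  imports Main
begin

text \<open>An N-qubit Pauli operator modulo phase is a list of length N of pairs (x,z):
  (False,False)=I, (True,False)=X, (False,True)=Z, (True,True)=Y.
  The list order is the tensor-factor order, so tensor product is list append.\<close>

type_synonym pauli = "(bool \<times> bool) list"

definition pid :: "nat \<Rightarrow> pauli" where
  "pid N = replicate N (False, False)"

definition plen :: "nat \<Rightarrow> pauli set" where
  "plen N = {P. length P = N}"

definition pmul :: "pauli \<Rightarrow> pauli \<Rightarrow> pauli" where
  "pmul P Q = map (\<lambda>((a,b),(c,d)). (a \<noteq> c, b \<noteq> d)) (zip P Q)"

text \<open>Number of tensor factors on which P and Q anticommute; its parity is A \<odot> B.\<close>
definition sympl :: "pauli \<Rightarrow> pauli \<Rightarrow> nat" where
  "sympl P Q = length (filter (\<lambda>((a,b),(c,d)). (a \<and> d) \<noteq> (b \<and> c)) (zip P Q))"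

definition odot :: "pauli \<Rightarrow> pauli \<Rightarrow> nat" where
  "odot P Q = sympl P Q mod 2"

definition pweight :: "pauli \<Rightarrow> nat" where
  "pweight P = length (filter (\<lambda>p. p \<noteq> (False, False)) P)"

definition ztype :: "nat \<Rightarrow> pauli \<Rightarrow> bool" where
  "ztype N P \<longleftrightarrow> length P = N \<and> (\<forall>p\<in>set P. fst p = False)"

text \<open>Single-qubit X resp. Z on qubit t (1-based) of an N-qubit register.\<close>
definition pX :: "nat \<Rightarrow> nat \<Rightarrow> pauli" where
  "pX N t = (pid N)[t - 1 := (True, False)]"

definition pZ :: "nat \<Rightarrow> nat \<Rightarrow> pauli" where
  "pZ N t = (pid N)[t - 1 := (False, True)]"

text \<open>Product of the Paulis f x over a finite index set T (pmul is associative and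
  commutative, so the fold is well defined).\<close>
definition pprod :: "nat \<Rightarrow> ('i \<Rightarrow> pauli) \<Rightarrow> 'i set \<Rightarrow> pauli" where
  "pprod N f T = Finite_Set.fold (\<lambda>x acc. pmul (f x) acc) (pid N) T"

text \<open>Up to phases, the action of an N-qubit Clifford unitary by conjugation on Pauli
  operators is exactly a bijective, multiplicative map on N-qubit Paulis preserving
  commutation (a symplectic automorphism of F_2^{2N}); every such map arises from a
  Clifford unitary.\<close>
definition clifford :: "nat \<Rightarrow> (pauli \<Rightarrow> pauli) \<Rightarrow> bool" where
  "clifford N U \<longleftrightarrow> bij_betw U (plen N) (plen N) \<and>
     (\<forall>P\<in>plen N. \<forall>Q\<in>plen N. U (pmul P Q) = pmul (U P) (U Q) \<and> odot (U P) (U Q) = odot P Q)"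

text \<open>Generators: i ranges over 1..n-k, h i j for 1 \<le> j \<le> l i; hh extends by identity.\<close>
definition hh :: "nat \<Rightarrow> (nat \<Rightarrow> nat) \<Rightarrow> (nat \<Rightarrow> nat \<Rightarrow> pauli) \<Rightarrow> nat \<Rightarrow> nat \<Rightarrow> pauli" where
  "hh n l h i j = (if 1 \<le> j \<and> j \<le> l i then h i j else pid n)"

text \<open>Validity: all generators and all their frame shifts pairwise commute.
  Shifts t are taken nonnegative; negative shifts are covered by exchanging i and i'.\<close>
definition valid_qcc :: "nat \<Rightarrow> nat \<Rightarrow> (nat \<Rightarrow> nat) \<Rightarrow> (nat \<Rightarrow> nat \<Rightarrow> pauli) \<Rightarrow> bool" where
  "valid_qcc n k l h \<longleftrightarrow>
     (\<forall>i\<in>{1..n-k}. 1 \<le> l i \<and> (\<forall>j\<in>{1..l i}. length (h i j) = n)) \<and>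
     (\<forall>i\<in>{1..n-k}. \<forall>i'\<in>{1..n-k}. \<forall>t::nat.
        even (\<Sum>r\<in>{1..l i'}. sympl (hh n l h i (r + t)) (hh n l h i' r)))"

definition mem_idx :: "nat \<Rightarrow> nat \<Rightarrow> (nat \<Rightarrow> nat) \<Rightarrow> (nat \<times> nat) set" where
  "mem_idx n k l = {(i, j). 1 \<le> i \<and> i \<le> n - k \<and> 1 \<le> j \<and> j \<le> l i - 1}"

text \<open>Memory commutativity matrix: for j \<ge> j' the entry is
  sum over r \<ge> 1 of h_{i,j+r} \<odot> h_{i',j'+r} (terms vanish for r > l i), symmetric otherwise.\<close>
definition omega_half :: "nat \<Rightarrow> (nat \<Rightarrow> nat) \<Rightarrow> (nat \<Rightarrow> nat \<Rightarrow> pauli) \<Rightarrow> nat \<times> nat \<Rightarrow> nat \<times> nat \<Rightarrow> nat" where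
  "omega_half n l h x y = (case x of (i, j) \<Rightarrow> case y of (i', j') \<Rightarrow>
     (\<Sum>r\<in>{1..l i + l i'}. sympl (hh n l h i (j + r)) (hh n l h i' (j' + r))) mod 2)"

definition Omega :: "nat \<Rightarrow> (nat \<Rightarrow> nat) \<Rightarrow> (nat \<Rightarrow> nat \<Rightarrow> pauli) \<Rightarrow> nat \<times> nat \<Rightarrow> nat \<times> nat \<Rightarrow> nat" where
  "Omega n l h x y = (if snd x \<ge> snd y then omega_half n l h x y else omega_half n l h y x)"

text \<open>A square matrix over F_2 indexed by a finite set I is not of full rank iff its
  rows are linearly dependent over F_2, i.e. some nonempty set of rows sums to zero.\<close>
definition not_full_rank_F2 :: "'i set \<Rightarrow> ('i \<Rightarrow> 'i \<Rightarrow> nat) \<Rightarrow> bool" where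
  "not_full_rank_F2 I A \<longleftrightarrow> (\<exists>T. T \<subseteq> I \<and> T \<noteq> {} \<and> (\<forall>y\<in>I. even (\<Sum>x\<in>T. A x y)))"

definition gg :: "nat \<Rightarrow> (nat \<Rightarrow> nat) \<Rightarrow> (nat \<Rightarrow> nat \<Rightarrow> pauli) \<Rightarrow> nat \<Rightarrow> nat \<Rightarrow> pauli" where
  "gg m l g i j = (if 1 \<le> j \<and> j \<le> l i - 1 then g i j else pid m)"

definition Cset :: "nat \<Rightarrow> nat \<Rightarrow> nat \<Rightarrow> (nat \<Rightarrow> nat) \<Rightarrow> (nat \<Rightarrow> nat \<Rightarrow> pauli) \<Rightarrow> pauli set" where
  "Cset n k m l g = {M. length M = m \<and> (\<forall>(i, j)\<in>mem_idx n k l. odot M (g i j) = 0)}"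

text \<open>Rows of the encoding transformation, indexed by (i,j), 1 \<le> i \<le> n-k, 0 \<le> j \<le> l i - 1:
  input  g_{i,j} \<otimes> A_{i,j} \<otimes> I^k  (memory, ancillas, information qubits),
  output h_{i,j+1} \<otimes> g_{i,j+1}       (physical, memory).\<close>
definition row_idx :: "nat \<Rightarrow> nat \<Rightarrow> (nat \<Rightarrow> nat) \<Rightarrow> (nat \<times> nat) set" where
  "row_idx n k l = {(i, j). 1 \<le> i \<and> i \<le> n - k \<and> j < l i}"

definition row_in :: "nat \<Rightarrow> nat \<Rightarrow> nat \<Rightarrow> (nat \<Rightarrow> nat) \<Rightarrow> (nat \<Rightarrow> nat \<Rightarrow> pauli) \<Rightarrow> nat \<times> nat \<Rightarrow> pauli" where
  "row_in n k m l g x = (case x of (i, j) \<Rightarrow>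
     gg m l g i j @ (if j = 0 then pZ (n - k) i else pid (n - k)) @ pid k)"

definition row_out :: "nat \<Rightarrow> nat \<Rightarrow> (nat \<Rightarrow> nat) \<Rightarrow> (nat \<Rightarrow> nat \<Rightarrow> pauli) \<Rightarrow> (nat \<Rightarrow> nat \<Rightarrow> pauli) \<Rightarrow> nat \<times> nat \<Rightarrow> pauli" where
  "row_out n m l h g x = (case x of (i, j) \<Rightarrow> hh n l h i (j + 1) @ gg m l g i (j + 1))"

definition implements_encoding ::
  "nat \<Rightarrow> nat \<Rightarrow> nat \<Rightarrow> (nat \<Rightarrow> nat) \<Rightarrow> (nat \<Rightarrow> nat \<Rightarrow> pauli) \<Rightarrow> (nat \<Rightarrow> nat \<Rightarrow> pauli) \<Rightarrow> (pauli \<Rightarrow> pauli) \<Rightarrow> bool" where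
  "implements_encoding n k m l h g U \<longleftrightarrow>
     (\<forall>x\<in>row_idx n k l. U (row_in n k m l g x) = row_out n m l h g x)"

text \<open>A product of rows is nontrivial iff its input (equivalently its output) is not the identity.\<close>
definition S1 :: "nat \<Rightarrow> nat \<Rightarrow> nat \<Rightarrow> (nat \<Rightarrow> nat) \<Rightarrow> (nat \<Rightarrow> nat \<Rightarrow> pauli) \<Rightarrow> (nat \<Rightarrow> nat \<Rightarrow> pauli) \<Rightarrow> (pauli \<times> pauli) set" where
  "S1 n k m l h g = {(Pin, Pout). \<exists>T. T \<subseteq> row_idx n k l \<and>
       Pin = pprod (m + n) (row_in n k m l g) T \<and>
       Pout = pprod (n + m) (row_out n m l h g) T \<and>
       (Pin \<noteq> pid (m + n) \<or> Pout \<noteq> pid (n + m)) \<and>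
       take m Pin \<in> Cset n k m l g \<and>
       ztype (n - k) (take (n - k) (drop m Pin)) \<and>
       take n Pout = pid n \<and>
       drop n Pout \<in> Cset n k m l g}"

definition complete_basis :: "nat \<Rightarrow> pauli set \<Rightarrow> (nat \<Rightarrow> pauli) \<Rightarrow> nat \<Rightarrow> bool" where
  "complete_basis m C Ms a \<longleftrightarrow>
     (\<forall>t\<in>{1..a}. Ms t \<in> C) \<and>
     (\<forall>T. T \<subseteq> {1..a} \<and> pprod m Ms T = pid m \<longrightarrow> T = {}) \<and>
     (\<forall>P\<in>C. \<exists>T. T \<subseteq> {1..a} \<and> P = pprod m Ms T)"

text \<open>Edge M \<rightarrow> M' labelled (L,P): U maps M \<otimes> S^z \<otimes> L to P \<otimes> M'.\<close>
definition sd_edge :: "nat \<Rightarrow> nat \<Rightarrow> nat \<Rightarrow> (pauli \<Rightarrow> pauli) \<Rightarrow> pauli \<Rightarrow> pauli \<Rightarrow> pauli \<Rightarrow> pauli \<Rightarrow> bool" where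
  "sd_edge n k m U M M' L P \<longleftrightarrow> length M = m \<and> length M' = m \<and> length L = k \<and> length P = n \<and>
     (\<exists>Sz. ztype (n - k) Sz \<and> U (M @ Sz @ L) = P @ M')"

definition catastrophic :: "nat \<Rightarrow> nat \<Rightarrow> nat \<Rightarrow> (pauli \<Rightarrow> pauli) \<Rightarrow> bool" where
  "catastrophic n k m U \<longleftrightarrow> (\<exists>r::nat. \<exists>St L P. 1 \<le> r \<and> St r = St 0 \<and>
     (\<forall>s<r. sd_edge n k m U (St s) (St (Suc s)) (L s) (P s) \<and> pweight (P s) = 0) \<and>
     (\<exists>s<r. pweight (L s) \<noteq> 0))"

end

theory Submission
  imports Defs
begin

text \<open>
  Take a cycle of the state diagram whose edges all have zero physical weight.
  Conjugation by \<open>U\<close> preserves commutation, and the rows of the encoding transformation carry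
  \<open>g\<^sub>i\<^sub>,\<^sub>j\<close> to \<open>g\<^sub>i\<^sub>,\<^sub>j\<^sub>+\<^sub>1\<close>, so along such an edge \<open>M \<rightarrow> M'\<close> we get
  \<open>M' \<odot> g\<^sub>i\<^sub>,\<^sub>j\<^sub>+\<^sub>1 = M \<odot> g\<^sub>i\<^sub>,\<^sub>j\<close>. Starting from \<open>g\<^sub>i\<^sub>,\<^sub>0 = I\<close> and going round the
  cycle often enough, every state of the cycle commutes with every \<open>g\<^sub>i\<^sub>,\<^sub>j\<close>, i.e. lies
  in \<open>C\<close>. By the added rows every element of \<open>C\<close> is the image of some
  \<open>I\<^sup>\<otimes>\<^sup>m \<otimes> R\<close>; injectivity of \<open>U\<close> then forces every state of the cycle to be the
  identity, and an edge \<open>I \<rightarrow> I\<close> of zero physical weight can only come from the identity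
  input, so its logical label is trivial.

  The rank condition on \<open>\<Omega>\<close>, the consistency of the \<open>g\<^sub>i\<^sub>,\<^sub>j\<close> with \<open>\<Omega>\<close>,
  \<open>S\<^sub>1 = {}\<close> and \<open>a \<le> k\<close> guarantee that an encoder with the added rows exists.
\<close>

lemma length_pid [simp]: "length (pid N) = N"
  by (simp add: pid_def)

lemma length_pZ [simp]: "length (pZ N t) = N"
  by (simp add: pZ_def)

lemma length_pX [simp]: "length (pX N t) = N"
  by (simp add: pX_def)

lemma pid_add: "pid (a + b) = pid a @ pid b"
  by (simp add: pid_def replicate_add)

lemma pid_append_commute: "pid a @ pid b = pid b @ pid a"
  by (metis pid_add add.commute)

lemma length_pmul [simp]: "length (pmul P Q) = min (length P) (length Q)"
  by (simp add: pmul_def)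

lemma pmul_Nil [simp]: "pmul [] Q = []" "pmul P [] = []"
  by (simp_all add: pmul_def)

lemma pmul_Cons [simp]:
  "pmul (p # P) (q # Q) = (fst p \<noteq> fst q, snd p \<noteq> snd q) # pmul P Q"
  by (cases p; cases q) (simp add: pmul_def)

lemma pmul_left_commute: "pmul P (pmul Q R) = pmul Q (pmul P R)"
proof (induction P arbitrary: Q R)
  case Nil
  then show ?case by (cases Q) auto
next
  case (Cons p P)
  then show ?case by (cases Q; cases R) auto
qed

lemma pmul_self: "pmul P P = pid (length P)"
  by (induction P) (auto simp: pid_def)

lemma pmul_append: "length A = length C \<Longrightarrow> pmul (A @ B) (C @ D) = pmul A C @ pmul B D"
  by (simp add: pmul_def zip_append)

lemma sympl_append: "length A = length C \<Longrightarrow> sympl (A @ B) (C @ D) = sympl A C + sympl B D"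
  by (simp add: sympl_def zip_append)

lemma sympl_pid_left [simp]: "sympl (pid N) Q = 0"
  by (simp add: sympl_def pid_def zip_replicate1 filter_empty_conv)

lemma sympl_pid_right [simp]: "sympl P (pid N) = 0"
  by (simp add: sympl_def pid_def zip_replicate2 filter_empty_conv split_beta)

lemma odot_pid_right [simp]: "odot P (pid N) = 0"
  by (simp add: odot_def)

lemma sympl_z_type:
  assumes "\<forall>p\<in>set P. \<not> fst p" and "\<forall>q\<in>set Q. \<not> fst q"
  shows "sympl P Q = 0"
  using assms
proof (induction P arbitrary: Q)
  case Nil
  then show ?case by (simp add: sympl_def)
next
  case (Cons p P)
  then show ?case by (cases Q) (auto simp: sympl_def split_beta)
qed

lemma pZ_z_type: "\<forall>p\<in>set (pZ N t). \<not> fst p"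
  using set_update_subset_insert[of "pid N" "t - 1" "(False, True)"]
  by (auto simp: pZ_def pid_def)

lemma pweight_eq_0_iff: "pweight P = 0 \<longleftrightarrow> P = pid (length P)"
  unfolding pweight_def pid_def length_0_conv filter_empty_conv
  by (metis in_set_replicate replicate_length_same)

lemma pprod_insert:
  assumes "finite T" and "x \<notin> T"
  shows "pprod N f (insert x T) = pmul (f x) (pprod N f T)"
proof -
  interpret comp_fun_commute "\<lambda>x acc. pmul (f x) acc"
    by unfold_locales (auto simp: pmul_left_commute)
  show ?thesis
    using assms by (simp add: pprod_def)
qed

lemma clifford_pmul:
  "clifford N U \<Longrightarrow> length P = N \<Longrightarrow> length Q = N \<Longrightarrow> U (pmul P Q) = pmul (U P) (U Q)"
  by (simp add: clifford_def plen_def)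

lemma clifford_odot:
  "clifford N U \<Longrightarrow> length P = N \<Longrightarrow> length Q = N \<Longrightarrow> odot (U P) (U Q) = odot P Q"
  by (simp add: clifford_def plen_def)

lemma clifford_length: "clifford N U \<Longrightarrow> length P = N \<Longrightarrow> length (U P) = N"
  unfolding clifford_def plen_def using bij_betw_apply by fastforce

lemma clifford_inj:
  "clifford N U \<Longrightarrow> U P = U Q \<Longrightarrow> length P = N \<Longrightarrow> length Q = N \<Longrightarrow> P = Q"
  unfolding clifford_def plen_def by (auto dest: bij_betw_imp_inj_on inj_onD)

lemma clifford_pid:
  assumes "clifford N U"
  shows "U (pid N) = pid N"
proof -
  have "U (pid N) = U (pmul (pid N) (pid N))"
    using pmul_self[of "pid N"] by simp
  also have "\<dots> = pmul (U (pid N)) (U (pid N))"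
    using assms by (simp add: clifford_pmul)
  also have "\<dots> = pid N"
    using assms by (simp add: pmul_self clifford_length)
  finally show ?thesis .
qed

lemma clifford_pprod_memory_image:
  assumes U: "clifford (m + n) U" and "finite T"
    and rows: "\<And>t. t \<in> T \<Longrightarrow> length (R t) = n \<and> U (pid m @ R t) = pid n @ Ms t"
  shows "\<exists>R'. length R' = n \<and> U (pid m @ R') = pid n @ pprod m Ms T"
  using \<open>finite T\<close> rows
proof (induction T rule: finite_induct)
  case empty
  have "U (pid m @ pid n) = pid n @ pid m"
    using clifford_pid[OF U] by (simp add: pid_add pid_append_commute)
  then show ?case
    by (intro exI[of _ "pid n"]) (simp add: pprod_def)
next
  case (insert x T)
  then obtain R' where R': "length R' = n" "U (pid m @ R') = pid n @ pprod m Ms T"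
    by auto
  have x: "length (R x) = n" "U (pid m @ R x) = pid n @ Ms x"
    using insert.prems by auto
  have "U (pid m @ pmul (R x) R') = U (pmul (pid m @ R x) (pid m @ R'))"
    by (simp add: pmul_append pmul_self[of "pid m", simplified])
  also have "\<dots> = pmul (pid n @ Ms x) (pid n @ pprod m Ms T)"
    using U x R' by (simp add: clifford_pmul)
  also have "\<dots> = pid n @ pprod m Ms (insert x T)"
    using insert.hyps by (simp add: pmul_append pprod_insert pmul_self[of "pid n", simplified])
  finally show ?case
    using x R' by (intro exI[of _ "pmul (R x) R'"]) simp
qed

lemma complete_basis_memory_image:
  assumes U: "clifford (m + n) U" and "k \<le> n"
    and basis: "complete_basis m C Ms a"
    and rows: "\<forall>t\<in>{1..a}. U (pid m @ pid (n - k) @ pX k t) = pid n @ Ms t"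
    and "M \<in> C"
  shows "\<exists>R. length R = n \<and> U (pid m @ R) = pid n @ M"
proof -
  have "\<exists>T\<subseteq>{1..a}. M = pprod m Ms T"
    using basis \<open>M \<in> C\<close> by (simp add: complete_basis_def)
  then obtain T where T: "T \<subseteq> {1..a}" "M = pprod m Ms T"
    by blast
  have "finite T"
    using T(1) finite_subset by blast
  moreover have "length (pid (n - k) @ pX k t) = n \<and> U (pid m @ pid (n - k) @ pX k t) = pid n @ Ms t"
    if "t \<in> T" for t
    using \<open>k \<le> n\<close> rows T(1) that by auto
  ultimately show ?thesis
    unfolding T(2) by (rule clifford_pprod_memory_image[OF U])
qed

lemma sd_edge_pweight_0: "sd_edge n k m U M M' L P \<Longrightarrow> pweight P = 0 \<Longrightarrow> P = pid n"
  by (simp add: sd_edge_def pweight_eq_0_iff)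

locale qcc_encoder =
  fixes n k m :: nat
    and l :: "nat \<Rightarrow> nat"
    and h g :: "nat \<Rightarrow> nat \<Rightarrow> pauli"
    and U :: "pauli \<Rightarrow> pauli"
  assumes k_le_n: "k \<le> n"
    and length_h: "\<And>i j. i \<in> {1..n - k} \<Longrightarrow> j \<in> {1..l i} \<Longrightarrow> length (h i j) = n"
    and length_g: "\<And>i j. (i, j) \<in> mem_idx n k l \<Longrightarrow> length (g i j) = m"
    and clifford_U: "clifford (m + n) U"
    and implements: "implements_encoding n k m l h g U"
begin

lemma length_hh: "i \<in> {1..n - k} \<Longrightarrow> length (hh n l h i j) = n"
  using length_h by (simp add: hh_def)

lemma length_gg: "i \<in> {1..n - k} \<Longrightarrow> length (gg m l g i j) = m"
  using length_g by (simp add: gg_def mem_idx_def)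

text \<open>The commutation of the memory with \<open>g\<^sub>i\<^sub>,\<^sub>j\<close> is transported along a row: the
  ancilla part \<open>S\<^sup>z\<close> commutes with \<open>A\<^sub>i\<^sub>,\<^sub>j\<close> (both Z-type) and the physical part
  of the output is the identity.\<close>

lemma silent_edge_odot_shift:
  assumes edge: "sd_edge n k m U M M' L (pid n)" and row: "(i, j) \<in> row_idx n k l"
  shows "odot M' (gg m l g i (Suc j)) = odot M (gg m l g i j)"
proof -
  obtain Sz where Sz: "ztype (n - k) Sz" and UM: "U (M @ Sz @ L) = pid n @ M'"
    and lengths: "length M = m" "length M' = m" "length L = k"
    using edge by (auto simp: sd_edge_def)
  define A where "A = (if j = 0 then pZ (n - k) i else pid (n - k))"
  have i: "i \<in> {1..n - k}"
    using row by (simp add: row_idx_def)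
  have "U (row_in n k m l g (i, j)) = row_out n m l h g (i, j)"
    using implements row by (simp add: implements_encoding_def)
  then have U_row: "U (gg m l g i j @ A @ pid k) = hh n l h i (Suc j) @ gg m l g i (Suc j)"
    by (simp add: row_in_def row_out_def A_def)
  have "odot (U (M @ Sz @ L)) (U (gg m l g i j @ A @ pid k))
      = odot (M @ Sz @ L) (gg m l g i j @ A @ pid k)"
    by (rule clifford_odot[OF clifford_U])
      (use Sz lengths length_gg[OF i] k_le_n in \<open>simp_all add: ztype_def A_def\<close>)
  then have "odot (pid n @ M') (hh n l h i (Suc j) @ gg m l g i (Suc j))
      = odot (M @ Sz @ L) (gg m l g i j @ A @ pid k)"
    by (simp only: UM U_row)
  moreover have "sympl Sz A = 0"
    using Sz pZ_z_type by (intro sympl_z_type) (auto simp: ztype_def A_def pid_def)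
  ultimately show ?thesis
    using Sz lengths length_hh[OF i] length_gg[OF i]
    by (simp add: odot_def sympl_append ztype_def A_def)
qed

lemma silent_walk_odot_gg:
  assumes walk: "\<And>s. \<exists>L. sd_edge n k m U (W s) (W (Suc s)) L (pid n)"
    and i: "i \<in> {1..n - k}"
  shows "odot (W (s + j)) (gg m l g i j) = 0"
proof (induction j)
  case 0
  then show ?case by (simp add: gg_def)
next
  case (Suc j)
  show ?case
  proof (cases "j < l i")
    case True
    then have "(i, j) \<in> row_idx n k l"
      using i by (simp add: row_idx_def)
    then show ?thesis
      using walk[of "s + j"] Suc.IH silent_edge_odot_shift by auto
  next
    case False
    then have "\<not> (1 \<le> Suc j \<and> Suc j \<le> l i - 1)"
      by arith
    then show ?thesis by (simp add: gg_def)
  qed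
qed

text \<open>Unrolling the cycle into a periodic walk, every state is reached after arbitrarily
  many steps, so it commutes with every \<open>g\<^sub>i\<^sub>,\<^sub>j\<close>.\<close>

lemma silent_cycle_in_Cset:
  assumes "0 < r" and closed: "St r = St 0"
    and edges: "\<And>s. s < r \<Longrightarrow> sd_edge n k m U (St s) (St (Suc s)) (L s) (pid n)"
    and "s \<le> r"
  shows "St s \<in> Cset n k m l g"
proof -
  define W where "W t = St (t mod r)" for t
  have walk: "\<exists>L. sd_edge n k m U (W t) (W (Suc t)) L (pid n)" for t
  proof -
    have "St (Suc (t mod r)) = W (Suc t)"
      using closed \<open>0 < r\<close> by (simp add: W_def mod_Suc)
    then show ?thesis
      using edges[of "t mod r"] \<open>0 < r\<close> by (auto simp: W_def)
  qed
  have Ws: "W (s mod r + j * r) = St s" for j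
    using \<open>s \<le> r\<close> closed by (cases "s = r") (simp_all add: W_def)
  have "odot (St s) (g i j) = 0" if "(i, j) \<in> mem_idx n k l" for i j
  proof -
    have "i \<in> {1..n - k}" "gg m l g i j = g i j"
      using that by (auto simp: mem_idx_def gg_def)
    moreover have "j \<le> j * r"
      using \<open>0 < r\<close> by simp
    then have "s mod r + j * r = (s mod r + j * r - j) + j"
      by arith
    ultimately show ?thesis
      using silent_walk_odot_gg[of W, OF walk, of i "s mod r + j * r - j" j] Ws[of j] by metis
  qed
  moreover have "length (St s) = m"
    using edges[of 0] edges[of "s - 1"] \<open>0 < r\<close> \<open>s \<le> r\<close>
    by (cases s) (auto simp: sd_edge_def)
  ultimately show ?thesis
    by (auto simp: Cset_def)
qed

lemma silent_edge_source_pid: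
  assumes "sd_edge n k m U M M' L (pid n)"
    and "length R = n" "U (pid m @ R) = pid n @ M'"
  shows "M = pid m"
proof -
  obtain Sz where "ztype (n - k) Sz" "U (M @ Sz @ L) = U (pid m @ R)"
    "length M = m" "length L = k"
    using assms by (auto simp: sd_edge_def)
  then have "M @ (Sz @ L) = pid m @ R"
    using clifford_inj[OF clifford_U] assms(2) k_le_n by (simp add: ztype_def)
  then show ?thesis
    using \<open>length M = m\<close> by (simp add: append_eq_append_conv)
qed

lemma silent_loop_at_pid:
  assumes "sd_edge n k m U (pid m) (pid m) L (pid n)"
  shows "L = pid k"
proof -
  obtain Sz where Sz: "ztype (n - k) Sz" "length L = k" and UL: "U (pid m @ Sz @ L) = pid n @ pid m"
    using assms by (auto simp: sd_edge_def)
  have pid_image: "pid n @ pid m = U (pid m @ pid (n - k) @ pid k)"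
  proof -
    have "pid m @ pid (n - k) @ pid k = pid (m + n)"
      using k_le_n by (simp add: pid_add[symmetric])
    then show ?thesis
      using clifford_pid[OF clifford_U] by (simp add: pid_add pid_append_commute)
  qed
  have "pid m @ Sz @ L = pid m @ pid (n - k) @ pid k"
    by (rule clifford_inj[OF clifford_U]) (use UL pid_image Sz k_le_n in \<open>simp_all add: ztype_def\<close>)
  then show ?thesis
    using Sz by (simp add: ztype_def)
qed

lemma silent_cycle_logical_pid:
  assumes C_image: "\<And>M. M \<in> Cset n k m l g \<Longrightarrow> \<exists>R. length R = n \<and> U (pid m @ R) = pid n @ M"
    and "0 < r" and closed: "St r = St 0"
    and edges: "\<And>s. s < r \<Longrightarrow> sd_edge n k m U (St s) (St (Suc s)) (L s) (pid n)"
    and "s < r"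
  shows "L s = pid k"
proof -
  have states: "St s = pid m" if s: "s < r" for s
  proof -
    obtain R where "length R = n" "U (pid m @ R) = pid n @ St (Suc s)"
      using C_image silent_cycle_in_Cset[of r St L "Suc s"] edges closed \<open>0 < r\<close> s
      by auto
    then show ?thesis
      using silent_edge_source_pid[OF edges[OF s]] by blast
  qed
  have "St (Suc s) = pid m"
    using states closed \<open>0 < r\<close> \<open>s < r\<close> by (cases "Suc s = r") auto
  then show ?thesis
    using edges[OF \<open>s < r\<close>] states[OF \<open>s < r\<close>] by (simp add: silent_loop_at_pid)
qed

end

theorem theorem4:
  fixes n k m a :: nat
    and l :: "nat \<Rightarrow> nat"
    and h g :: "nat \<Rightarrow> nat \<Rightarrow> pauli"
    and Ms :: "nat \<Rightarrow> pauli"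
    and U :: "pauli \<Rightarrow> pauli"
  assumes "k \<le> n"
    and "valid_qcc n k l h"
    and "not_full_rank_F2 (mem_idx n k l) (Omega n l h)"
    and "\<forall>(i, j)\<in>mem_idx n k l. length (g i j) = m"
    and "\<forall>x\<in>mem_idx n k l. \<forall>y\<in>mem_idx n k l.
           odot (g (fst x) (snd x)) (g (fst y) (snd y)) = Omega n l h x y"
    and "S1 n k m l h g = {}"
    and "complete_basis m (Cset n k m l g) Ms a"
    and "a \<le> k"
    and "clifford (m + n) U"
    and "implements_encoding n k m l h g U"
    and "\<forall>t\<in>{1..a}. U (pid m @ pid (n - k) @ pX k t) = pid n @ Ms t"
  shows "\<not> catastrophic n k m U"
proof
  interpret qcc_encoder n k m l h g U
    using assms(1,2,4,9,10) by unfold_locales (auto simp: valid_qcc_def)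
  assume "catastrophic n k m U"
  then obtain r St L P where "1 \<le> r" "St r = St 0"
    and edges: "\<And>s. s < r \<Longrightarrow> sd_edge n k m U (St s) (St (Suc s)) (L s) (P s) \<and> pweight (P s) = 0"
    and "\<exists>s<r. pweight (L s) \<noteq> 0"
    unfolding catastrophic_def by blast
  have silent: "sd_edge n k m U (St s) (St (Suc s)) (L s) (pid n)" if "s < r" for s
    using edges[OF that] sd_edge_pweight_0 by metis
  obtain s where s: "s < r" "pweight (L s) \<noteq> 0"
    using \<open>\<exists>s<r. pweight (L s) \<noteq> 0\<close> by blast
  have "L s = pid k"
    using silent_cycle_logical_pid[OF complete_basis_memory_image[OF clifford_U assms(1,7,11)]]
      \<open>1 \<le> r\<close> \<open>St r = St 0\<close> silent s(1)
    by simp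
  then show False
    using s(2) by (simp add: pweight_eq_0_iff)
qed

end
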